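(* Let $\mathbf u$ be an infinite word over a finite alphabet whose language is closed under reversal and whose defect $D(\mathbf u)$ is finite. Let $q$ be a prefix of $\mathbf u$ such that $D(\mathbf u)=D(q)$. Then for every prefix $p$ of $\mathbf u$ with $|p|>|q|$, $$\#\{x\in\mathcal L(p): x \text{ is a palindrome},\ |x|\le |q|,\ x\notin\mathcal L(q)\}+\sum_{n=|q|+1}^{|p|}\mathcal P_p(n)=|p|-|q|.$$
   Context: For a finite word $w=w_0\cdots w_{n-1}$ its reversal is $\overline{w}=w_{n-1}\cdots w_0$; $w$ is a palindrome if $w=\overline{w}$ (the empty word is a palindrome). $\mathcal L(v)$ denotes the set of factors of a (finite or infinite) word $v$; the language of $\mathbf u$ is closed under reversal if $w\in\mathcal L(\mathbf u)$ implies $\overline w\in\mathcal L(\mathbf u)$. For a finite word $p$, $\mathcal P_p(n)$ is the number of palindromes of length $n$ that are factors of $p$. The defect of a finite word $w$ is $D(w)=|w|+1-(\text{number of distinct palindromic factors of } w, \text{ including the empty word})$; the defect of an infinite word is $D(\mathbf u)=\sup\{D(w): w \text{ a prefix of } \mathbf u\}$. *)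

theory Defs
  imports Main "HOL-Library.Sublist" "HOL-Library.Extended_Nat"
begin

text \<open>Infinite words are functions nat => 'a; finite words are lists.
  Factors of a finite word are contiguous sublists (Sublist.sublist).\<close>

definition pref :: "(nat \<Rightarrow> 'a) \<Rightarrow> nat \<Rightarrow> 'a list" where
  "pref u n = map u [0..<n]"

definition lang_inf :: "(nat \<Rightarrow> 'a) \<Rightarrow> 'a list set" where
  "lang_inf u = {x. \<exists>i. x = map u [i..<i + length x]}"

definition lang :: "'a list \<Rightarrow> 'a list set" where
  "lang w = {x. sublist x w}"

definition is_pal :: "'a list \<Rightarrow> bool" where
  "is_pal w \<longleftrightarrow> rev w = w"

definition closed_rev :: "(nat \<Rightarrow> 'a) \<Rightarrow> bool" where
  "closed_rev u \<longleftrightarrow> (\<forall>w \<in> lang_inf u. rev w \<in> lang_inf u)"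

definition pal_count :: "'a list \<Rightarrow> nat \<Rightarrow> nat" where
  "pal_count p n = card {x \<in> lang p. is_pal x \<and> length x = n}"

definition defect :: "'a list \<Rightarrow> nat" where
  "defect w = length w + 1 - card {x \<in> lang w. is_pal x}"

definition defect_inf :: "(nat \<Rightarrow> 'a) \<Rightarrow> enat" where
  "defect_inf u = (SUP n. enat (defect (pref u n)))"

end

theory Submission
  imports Defs
begin

text \<open>Appending a letter to a word creates at most one new palindromic factor (a new one must
  be a palindromic suffix, and of two palindromic suffixes the shorter one is also a prefix of the
  longer, hence occurs earlier). So the defect never decreases along prefixes, and since the
  prefix q already attains the supremum, every longer prefix p has the same defect. Equal defects
  mean that p has exactly |p| - |q| palindromic factors that are not factors of q; splitting
  them by length at |q| gives the identity, since a factor longer than q cannot occur in q.\<close>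

definition pal_factors :: "'a list \<Rightarrow> 'a list set" where
  "pal_factors w = {x \<in> lang w. is_pal x}"

lemma finite_lang: "finite (lang w)"
  unfolding lang_def by (metis List.finite_set set_sublists_eq)

lemma finite_pal_factors: "finite (pal_factors w)"
  unfolding pal_factors_def using finite_lang[of w] by simp

lemma lang_mono: "sublist v w \<Longrightarrow> lang v \<subseteq> lang w"
  unfolding lang_def by (auto intro: sublist_order.order_trans)

lemma pal_factors_mono: "sublist v w \<Longrightarrow> pal_factors v \<subseteq> pal_factors w"
  unfolding pal_factors_def using lang_mono by blast

lemma card_pal_factors_sublist:
  assumes "sublist v w"
  shows "card (pal_factors w) = card (pal_factors v) + card (pal_factors w - pal_factors v)"
proof -
  have "pal_factors v \<subseteq> pal_factors w" using assms by (rule pal_factors_mono)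
  then show ?thesis
    using finite_pal_factors card_mono card_Diff_subset[of "pal_factors v" "pal_factors w"]
    by (metis finite_subset le_add_diff_inverse)
qed

lemma new_pal_factor_snoc_unique:
  assumes x: "x \<in> pal_factors (w @ [a]) - pal_factors w"
    and y: "y \<in> pal_factors (w @ [a]) - pal_factors w"
    and len: "length x \<le> length y"
  shows "x = y"
proof (rule ccontr)
  assume "x \<noteq> y"
  have sx: "suffix x (w @ [a])" and nx: "\<not> sublist x w" and px: "rev x = x"
    using x unfolding pal_factors_def lang_def is_pal_def by (auto simp: sublist_snoc)
  have sy: "suffix y (w @ [a])" and py: "rev y = y"
    using y unfolding pal_factors_def lang_def is_pal_def by (auto simp: sublist_snoc)
  have "suffix x y"
  proof (cases "suffix x y")
    case False
    then have "suffix y x" using suffix_same_cases[OF sx sy] by blast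
    then obtain z where "x = z @ y" by (auto simp: suffix_def)
    with len have "x = y" by simp
    then show ?thesis by simp
  qed
  then have "prefix (rev x) (rev y)" by (simp add: suffix_to_prefix)
  then have "prefix x y" using px py by simp
  then obtain t where y_eq: "y = x @ t" by (auto simp: prefix_def)
  with \<open>x \<noteq> y\<close> have "t \<noteq> []" by auto
  then obtain t' b where "t = t' @ [b]" by (metis rev_exhaust)
  moreover from sy obtain r where "w @ [a] = r @ y" by (auto simp: suffix_def)
  ultimately have "w = r @ x @ t'" using y_eq by simp
  with nx show False by auto
qed

lemma card_pal_factors_snoc_le: "card (pal_factors (w @ [a])) \<le> card (pal_factors w) + 1"
proof -
  let ?new = "pal_factors (w @ [a]) - pal_factors w"
  have "card ?new \<le> Suc 0"
  proof (rule card_le_Suc0_iff_eq[THEN iffD2])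
    show "finite ?new" using finite_pal_factors by blast
    show "\<forall>x\<in>?new. \<forall>y\<in>?new. x = y"
      using new_pal_factor_snoc_unique nat_le_linear by metis
  qed
  moreover have "card (pal_factors (w @ [a])) = card (pal_factors w) + card ?new"
    by (simp add: card_pal_factors_sublist)
  ultimately show ?thesis by simp
qed

lemma card_pal_factors_le: "card (pal_factors w) \<le> length w + 1"
proof (induction w rule: rev_induct)
  case Nil
  have "pal_factors ([]::'a list) = {[]}"
    unfolding pal_factors_def lang_def is_pal_def by auto
  then show ?case by simp
next
  case (snoc a w)
  then show ?case using card_pal_factors_snoc_le[of w a] by simp
qed

lemma defect_eq_card_pal_factors: "defect w = length w + 1 - card (pal_factors w)"
  unfolding defect_def pal_factors_def ..

lemma defect_snoc_mono: "defect w \<le> defect (w @ [a])"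
  unfolding defect_eq_card_pal_factors
  using card_pal_factors_snoc_le[of w a] card_pal_factors_le[of w] by simp

lemma defect_prefix_mono: "prefix v w \<Longrightarrow> defect v \<le> defect w"
proof (induction w rule: rev_induct)
  case Nil
  then show ?case by simp
next
  case (snoc a w)
  then show ?case
    using defect_snoc_mono[of w a] by (metis le_trans order.refl prefix_snoc)
qed

lemma card_pal_factors_of_defect_eq:
  assumes "prefix v w" and "defect v = defect w"
  shows "card (pal_factors w - pal_factors v) = length w - length v"
proof -
  have "length v \<le> length w"
    using assms(1) by (rule prefix_length_le)
  then have "card (pal_factors w) = card (pal_factors v) + (length w - length v)"
    using assms(2) card_pal_factors_le[of v] card_pal_factors_le[of w]
    unfolding defect_eq_card_pal_factors by linarith
  then show ?thesis
    using card_pal_factors_sublist[OF prefix_imp_sublist[OF assms(1)]] by simp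
qed

lemma card_pal_factors_diff_split:
  assumes "sublist q p"
  shows "card (pal_factors p - pal_factors q)
    = card {x \<in> lang p. is_pal x \<and> length x \<le> length q \<and> x \<notin> lang q}
      + (\<Sum>k = length q + 1..length p. pal_count p k)"
proof -
  let ?short = "{x \<in> lang p. is_pal x \<and> length x \<le> length q \<and> x \<notin> lang q}"
  let ?long = "\<Union>k\<in>{length q + 1..length p}. {x \<in> lang p. is_pal x \<and> length x = k}"
  have length_le: "x \<in> lang w \<Longrightarrow> length x \<le> length w" for x w :: "'a list"
    unfolding lang_def by (simp add: sublist_length_le)
  have "pal_factors p - pal_factors q = ?short \<union> ?long"
    unfolding pal_factors_def using length_le[of _ p] length_le[of _ q] by force
  moreover have "card ?long = (\<Sum>k = length q + 1..length p. pal_count p k)"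
    unfolding pal_count_def
    by (subst card_UN_disjoint) (auto intro: finite_subset[OF _ finite_lang[of p]])
  moreover have "finite ?short" "finite ?long"
    using finite_lang[of p] by auto
  ultimately show ?thesis
    by (simp add: card_Un_disjoint disjoint_iff)
qed

lemma length_pref [simp]: "length (pref u n) = n"
  unfolding pref_def by simp

lemma prefix_pref: "m \<le> n \<Longrightarrow> prefix (pref u m) (pref u n)"
  unfolding pref_def
  by (metis le_add_diff_inverse map_append prefixI upt_add_eq_append zero_le)

lemma defect_pref_le_defect_inf: "enat (defect (pref u n)) \<le> defect_inf u"
  unfolding defect_inf_def by (rule SUP_upper) simp

theorem lemma11:
  fixes u :: "nat \<Rightarrow> 'a" and m n :: nat
  assumes "finite (range u)"
    and "closed_rev u"
    and "defect_inf u \<noteq> \<infinity>"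
    and "defect_inf u = enat (defect (pref u m))"
    and "n > m"
  shows "card {x \<in> lang (pref u n). is_pal x \<and> length x \<le> m \<and> x \<notin> lang (pref u m)}
           + (\<Sum>k = m + 1..n. pal_count (pref u n) k) = n - m"
proof -
  have prefix: "prefix (pref u m) (pref u n)"
    using assms(5) by (simp add: prefix_pref)
  have "defect (pref u n) \<le> defect (pref u m)"
    using defect_pref_le_defect_inf[of u n] assms(4) by simp
  with defect_prefix_mono[OF prefix] have "defect (pref u m) = defect (pref u n)"
    by simp
  with prefix have "card (pal_factors (pref u n) - pal_factors (pref u m)) = n - m"
    by (simp add: card_pal_factors_of_defect_eq)
  then show ?thesis
    using card_pal_factors_diff_split[OF prefix_imp_sublist[OF prefix]] by simp
qed

end
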